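(* Let $K\in\{1,2,3,4\}$, let $n_0\ge 0$, and let $\alpha_1,\dots,\alpha_K\ge 0$ and $\beta_1,\dots,\beta_K>0$ be real numbers. Consider the linear function $f(x_1,\dots,x_K)=\sum_{k=1}^{K}\alpha_k x_k$ of real variables $x_1,\dots,x_K$, subject to the constraints $$\Big|\sum_{k\in\mathcal{K}}\beta_k x_k\Big|\le n_0\sqrt{\sum_{k\in\mathcal{K}}\beta_k}\quad\text{for every nonempty } \mathcal{K}\subseteq\{1,2,\dots,K\}.$$ Set $\gamma_k=\alpha_k/\beta_k$ and choose a permutation $\sigma$ of $\{1,\dots,K\}$ such that $\gamma_{\sigma(1)}\le\gamma_{\sigma(2)}\le\dots\le\gamma_{\sigma(K)}$; write $\tilde\gamma_k=\gamma_{\sigma(k)}$, $\tilde\alpha_k=\alpha_{\sigma(k)}$, $\tilde\beta_k=\beta_{\sigma(k)}$, $\tilde x_k=x_{\sigma(k)}$, and $\tilde\gamma_0=0$. Then the maximum of $f$ over the feasible set is $$f_{\max}=\mathcal{F}(K,n_0,V_\alpha,V_\beta):=n_0\sum_{n=1}^{K}(\tilde\gamma_n-\tilde\gamma_{n-1})\sqrt{\sum_{k=n}^{K}\tilde\beta_k},$$ where $V_\alpha=[\alpha_1,\dots,\alpha_K]$, $V_\beta=[\beta_1,\dots,\beta_K]$, and it is attained at the feasible point given by $\tilde x_k=\tilde x_k^{*}$, where $$\tilde x_k^{*}=\frac{n_0}{\tilde\beta_k}\left(\sqrt{\sum_{n=k}^{K}\tilde\beta_n}-\sqrt{\sum_{n=k+1}^{K}\tilde\beta_n}\right),\quad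 k=1,\dots,K$$ (an empty sum being $0$). Moreover, the minimum of $f$ over the feasible set is $f_{\min}=-f_{\max}=-\mathcal{F}(K,n_0,V_\alpha,V_\beta)$, attained at $\tilde x_k=-\tilde x_k^{*}$, $k=1,\dots,K$. *)

theory Defs
  imports "HOL-Analysis.Analysis" "HOL-Combinatorics.Permutations"
begin

text \<open>Vectors indexed by 1..K are represented as functions nat => real; only
  values at indices 1..K matter.\<close>

definition lin_obj :: "nat \<Rightarrow> (nat \<Rightarrow> real) \<Rightarrow> (nat \<Rightarrow> real) \<Rightarrow> real" where
  "lin_obj K \<alpha> x = (\<Sum>k=1..K. \<alpha> k * x k)"

definition feasible :: "nat \<Rightarrow> real \<Rightarrow> (nat \<Rightarrow> real) \<Rightarrow> (nat \<Rightarrow> real) \<Rightarrow> bool" where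
  "feasible K n0 \<beta> x \<longleftrightarrow>
     (\<forall>S. S \<subseteq> {1..K} \<and> S \<noteq> {} \<longrightarrow>
        \<bar>\<Sum>k\<in>S. \<beta> k * x k\<bar> \<le> n0 * sqrt (\<Sum>k\<in>S. \<beta> k))"

definition gamma_tilde :: "(nat \<Rightarrow> real) \<Rightarrow> (nat \<Rightarrow> real) \<Rightarrow> (nat \<Rightarrow> nat) \<Rightarrow> nat \<Rightarrow> real" where
  "gamma_tilde \<alpha> \<beta> \<sigma> n = (if n = 0 then 0 else \<alpha> (\<sigma> n) / \<beta> (\<sigma> n))"

definition Fval :: "nat \<Rightarrow> real \<Rightarrow> (nat \<Rightarrow> real) \<Rightarrow> (nat \<Rightarrow> real) \<Rightarrow> (nat \<Rightarrow> nat) \<Rightarrow> real" where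
  "Fval K n0 \<alpha> \<beta> \<sigma> =
     n0 * (\<Sum>n=1..K. (gamma_tilde \<alpha> \<beta> \<sigma> n - gamma_tilde \<alpha> \<beta> \<sigma> (n - 1))
                      * sqrt (\<Sum>k=n..K. \<beta> (\<sigma> k)))"

definition xstar_tilde :: "nat \<Rightarrow> real \<Rightarrow> (nat \<Rightarrow> real) \<Rightarrow> (nat \<Rightarrow> nat) \<Rightarrow> nat \<Rightarrow> real" where
  "xstar_tilde K n0 \<beta> \<sigma> k =
     n0 / \<beta> (\<sigma> k) * (sqrt (\<Sum>n=k..K. \<beta> (\<sigma> n)) - sqrt (\<Sum>n=k+1..K. \<beta> (\<sigma> n)))"

end

theory Submission imports Defs begin

text \<open>Sorting by the ratios \<open>\<gamma>\<close> and summing by parts turns the objective into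
  \<open>\<Sum>\<^sub>n (\<gamma>\<^sub>n - \<gamma>\<^sub>n\<^sub>-\<^sub>1) \<cdot> \<Sum>\<^sub>k\<^sub>\<ge>\<^sub>n \<beta>\<^sub>k x\<^sub>k\<close> with nonnegative coefficients, so the constraints on the
  tail index sets \<open>{n..K}\<close> alone bound it by \<open>\<F>\<close>, and \<open>x\<^sup>*\<close> makes all of them tight.
  On an arbitrary index set \<open>J\<close> the weighted sum of \<open>x\<^sup>*\<close> is \<open>\<Sum>\<^sub>j\<^sub>\<in>\<^sub>J (\<surd>T\<^sub>j - \<surd>T\<^sub>j\<^sub>+\<^sub>1)\<close>,
  \<open>T\<close> being the tail sums of \<open>\<beta>\<close>. By concavity of \<open>\<surd>\<close>, each increment only grows when
  \<open>T\<^sub>j\<^sub>+\<^sub>1\<close> is replaced by the smaller sum of \<open>\<beta>\<close> over the elements of \<open>J\<close> beyond \<open>j\<close>, and then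
  the sum telescopes to \<open>\<surd>(\<Sum>\<^sub>j\<^sub>\<in>\<^sub>J \<beta>\<^sub>j)\<close>; so \<open>x\<^sup>*\<close> is feasible. The minimum follows from
  the symmetry \<open>x \<mapsto> -x\<close>.\<close>

lemma sqrt_add_diff_antimono:
  fixes s t c :: real
  assumes "0 \<le> s" "s \<le> t" "0 \<le> c"
  shows "sqrt (t + c) - sqrt t \<le> sqrt (s + c) - sqrt s"
proof -
  have "(t + c) * s \<le> (s + c) * t"
    using assms by (simp add: algebra_simps mult_left_mono)
  then have "sqrt (t + c) * sqrt s \<le> sqrt (s + c) * sqrt t"
    by (simp add: real_sqrt_mult[symmetric])
  then have "(sqrt (t + c) + sqrt s)\<^sup>2 \<le> (sqrt (s + c) + sqrt t)\<^sup>2"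
    using assms by (simp add: power2_sum)
  then have "sqrt (t + c) + sqrt s \<le> sqrt (s + c) + sqrt t"
    by (rule power2_le_imp_le) (use assms in simp)
  then show ?thesis by simp
qed

lemma sum_sqrt_tail_diff_le_sqrt_sum:
  fixes b :: "nat \<Rightarrow> real"
  assumes nonneg: "\<And>k. k \<in> {m..K} \<Longrightarrow> 0 \<le> b k" and J: "J \<subseteq> {m..K}"
  shows "(\<Sum>j\<in>J. sqrt (\<Sum>n=j..K. b n) - sqrt (\<Sum>n=Suc j..K. b n)) \<le> sqrt (\<Sum>j\<in>J. b j)"
proof -
  have "finite J" using J finite_subset by blast
  then show ?thesis using J
  proof (induction J rule: finite_linorder_min_induct)
    case empty
    then show ?case by simp
  next
    case (insert j A)
    define T where "T = (\<Sum>n=Suc j..K. b n)"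
    define s where "s = (\<Sum>i\<in>A. b i)"
    have j: "j \<in> {m..K}" and A: "A \<subseteq> {Suc j..K}" and "j \<notin> A"
      using insert.prems insert.hyps(2) by (auto simp: Suc_le_eq)
    have "0 \<le> s" "s \<le> T"
      unfolding s_def T_def using A j nonneg by (auto intro!: sum_nonneg sum_mono2)
    have "(\<Sum>i\<in>A. sqrt (\<Sum>n=i..K. b n) - sqrt (\<Sum>n=Suc i..K. b n)) \<le> sqrt s"
      unfolding s_def using insert.IH insert.prems by blast
    moreover have "(\<Sum>n=j..K. b n) = T + b j"
      unfolding T_def using j by (simp add: sum.atLeast_Suc_atMost)
    ultimately have "(\<Sum>i\<in>insert j A. sqrt (\<Sum>n=i..K. b n) - sqrt (\<Sum>n=Suc i..K. b n))
        \<le> (sqrt (s + b j) - sqrt s) + sqrt s"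
      using sqrt_add_diff_antimono[OF \<open>0 \<le> s\<close> \<open>s \<le> T\<close> nonneg[OF j]] insert.hyps(1) \<open>j \<notin> A\<close>
      by (simp add: T_def)
    also have "\<dots> = sqrt (\<Sum>i\<in>insert j A. b i)"
      using \<open>j \<notin> A\<close> insert.hyps(1) by (simp add: s_def add.commute)
    finally show ?case .
  qed
qed

lemma sum_diff_pred_telescope:
  fixes G :: "nat \<Rightarrow> real"
  shows "(\<Sum>n=1..k. G n - G (n - 1)) = G k - G 0"
  by (induction k) auto

lemma sum_mult_eq_sum_diff_mult_tail:
  fixes G c :: "nat \<Rightarrow> real"
  assumes "G 0 = 0"
  shows "(\<Sum>k=1..K. G k * c k) = (\<Sum>n=1..K. (G n - G (n - 1)) * (\<Sum>k=n..K. c k))"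
proof (induction K)
  case 0
  then show ?case by simp
next
  case (Suc K)
  have "(\<Sum>k=n..Suc K. c k) = (\<Sum>k=n..K. c k) + c (Suc K)" if "n \<in> {1..Suc K}" for n
    using that by (simp add: sum.cl_ivl_Suc)
  then have "(\<Sum>n=1..Suc K. (G n - G (n - 1)) * (\<Sum>k=n..Suc K. c k))
      = (\<Sum>n=1..Suc K. (G n - G (n - 1)) * (\<Sum>k=n..K. c k))
        + (\<Sum>n=1..Suc K. G n - G (n - 1)) * c (Suc K)"
    by (simp add: distrib_left sum.distrib sum_distrib_right del: sum.cl_ivl_Suc)
  also have "\<dots> = (\<Sum>n=1..K. (G n - G (n - 1)) * (\<Sum>k=n..K. c k)) + G (Suc K) * c (Suc K)"
    using sum_diff_pred_telescope[of G "Suc K"] assms by simp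
  finally show ?case
    using Suc by simp
qed

lemma feasible_permute_iff:
  assumes perm: "\<sigma> permutes {1..K}"
  shows "feasible K n0 \<beta> x \<longleftrightarrow>
    (\<forall>J. J \<subseteq> {1..K} \<and> J \<noteq> {} \<longrightarrow>
       \<bar>\<Sum>k\<in>J. \<beta> (\<sigma> k) * x (\<sigma> k)\<bar> \<le> n0 * sqrt (\<Sum>k\<in>J. \<beta> (\<sigma> k)))"
    (is "_ \<longleftrightarrow> (\<forall>J. ?sub J \<longrightarrow> ?bound J)")
proof -
  have image: "?bound J \<longleftrightarrow> \<bar>\<Sum>i\<in>\<sigma> ` J. \<beta> i * x i\<bar> \<le> n0 * sqrt (\<Sum>i\<in>\<sigma> ` J. \<beta> i)" for J
    using permutes_inj_on[OF perm] by (simp add: sum.reindex)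
  have sub_image: "?sub J \<Longrightarrow> ?sub (\<sigma> ` J)" for J
    using permutes_image[OF perm] image_mono[of J "{1..K}" \<sigma>] by auto
  have sub_preimage: "?sub S \<Longrightarrow> \<exists>J. S = \<sigma> ` J \<and> ?sub J" for S
    using permutes_surj[OF perm] permutes_image[OF permutes_inv[OF perm]]
    by (intro exI[of _ "inv \<sigma> ` S"]) (auto simp: image_f_inv_f)
  show ?thesis
    unfolding feasible_def
  proof (intro iffI allI impI)
    fix J
    assume "\<forall>S. ?sub S \<longrightarrow> \<bar>\<Sum>i\<in>S. \<beta> i * x i\<bar> \<le> n0 * sqrt (\<Sum>i\<in>S. \<beta> i)" and "?sub J"
    then show "?bound J"
      unfolding image using sub_image by blast
  next
    fix S
    assume bound: "\<forall>J. ?sub J \<longrightarrow> ?bound J" and "?sub S"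
    obtain J where S: "S = \<sigma> ` J" and J: "?sub J"
      using sub_preimage[OF \<open>?sub S\<close>] by blast
    from bound J have "?bound J"
      by blast
    then show "\<bar>\<Sum>i\<in>S. \<beta> i * x i\<bar> \<le> n0 * sqrt (\<Sum>i\<in>S. \<beta> i)"
      unfolding image S .
  qed
qed

lemma feasible_uminus_iff: "feasible K n0 \<beta> (\<lambda>k. - x k) \<longleftrightarrow> feasible K n0 \<beta> x"
  unfolding feasible_def by (simp add: sum_negf)

lemma lin_obj_uminus: "lin_obj K \<alpha> (\<lambda>k. - x k) = - lin_obj K \<alpha> x"
  unfolding lin_obj_def by (simp add: sum_negf)

lemma gamma_tilde_diff_nonneg:
  assumes perm: "\<sigma> permutes {1..K}"
    and \<alpha>: "\<And>k. k \<in> {1..K} \<Longrightarrow> \<alpha> k \<ge> 0"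
    and \<beta>: "\<And>k. k \<in> {1..K} \<Longrightarrow> \<beta> k > 0"
    and sorted: "\<And>i j. i \<in> {1..K} \<Longrightarrow> j \<in> {1..K} \<Longrightarrow> i \<le> j \<Longrightarrow>
                   \<alpha> (\<sigma> i) / \<beta> (\<sigma> i) \<le> \<alpha> (\<sigma> j) / \<beta> (\<sigma> j)"
    and n: "n \<in> {1..K}"
  shows "0 \<le> gamma_tilde \<alpha> \<beta> \<sigma> n - gamma_tilde \<alpha> \<beta> \<sigma> (n - 1)"
proof (cases "n = 1")
  case True
  have "\<sigma> 1 \<in> {1..K}"
    using permutes_in_image[OF perm] n True by simp
  then show ?thesis
    using True \<alpha> \<beta> by (simp add: gamma_tilde_def less_imp_le)
next
  case False
  then have "n - 1 \<in> {1..K}"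
    using n by auto
  then show ?thesis
    using sorted[OF _ n diff_le_self] n False by (simp add: gamma_tilde_def)
qed

lemma lin_obj_eq_sum_gamma_tilde_diff:
  assumes perm: "\<sigma> permutes {1..K}" and \<beta>: "\<And>k. k \<in> {1..K} \<Longrightarrow> \<beta> k \<noteq> 0"
  shows "lin_obj K \<alpha> x =
    (\<Sum>n=1..K. (gamma_tilde \<alpha> \<beta> \<sigma> n - gamma_tilde \<alpha> \<beta> \<sigma> (n - 1))
               * (\<Sum>k=n..K. \<beta> (\<sigma> k) * x (\<sigma> k)))"
proof -
  have "lin_obj K \<alpha> x = (\<Sum>k=1..K. \<alpha> (\<sigma> k) * x (\<sigma> k))"
    unfolding lin_obj_def
    using sum.reindex_bij_betw[OF permutes_imp_bij[OF perm], of "\<lambda>k. \<alpha> k * x k"] by simp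
  also have "\<dots> = (\<Sum>k=1..K. gamma_tilde \<alpha> \<beta> \<sigma> k * (\<beta> (\<sigma> k) * x (\<sigma> k)))"
    using \<beta> permutes_in_image[OF perm] by (intro sum.cong) (auto simp: gamma_tilde_def)
  also have "\<dots> = (\<Sum>n=1..K. (gamma_tilde \<alpha> \<beta> \<sigma> n - gamma_tilde \<alpha> \<beta> \<sigma> (n - 1))
                              * (\<Sum>k=n..K. \<beta> (\<sigma> k) * x (\<sigma> k)))"
    by (rule sum_mult_eq_sum_diff_mult_tail) (simp add: gamma_tilde_def)
  finally show ?thesis .
qed

lemma Fval_eq_sum_gamma_tilde_diff:
  "Fval K n0 \<alpha> \<beta> \<sigma> =
    (\<Sum>n=1..K. (gamma_tilde \<alpha> \<beta> \<sigma> n - gamma_tilde \<alpha> \<beta> \<sigma> (n - 1))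
               * (n0 * sqrt (\<Sum>k=n..K. \<beta> (\<sigma> k))))"
  unfolding Fval_def by (simp add: sum_distrib_left ac_simps)

lemma lin_obj_le_Fval:
  assumes perm: "\<sigma> permutes {1..K}"
    and \<alpha>: "\<And>k. k \<in> {1..K} \<Longrightarrow> \<alpha> k \<ge> 0"
    and \<beta>: "\<And>k. k \<in> {1..K} \<Longrightarrow> \<beta> k > 0"
    and sorted: "\<And>i j. i \<in> {1..K} \<Longrightarrow> j \<in> {1..K} \<Longrightarrow> i \<le> j \<Longrightarrow>
                   \<alpha> (\<sigma> i) / \<beta> (\<sigma> i) \<le> \<alpha> (\<sigma> j) / \<beta> (\<sigma> j)"
    and x: "feasible K n0 \<beta> x"
  shows "lin_obj K \<alpha> x \<le> Fval K n0 \<alpha> \<beta> \<sigma>"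
proof -
  have tail: "(\<Sum>k=n..K. \<beta> (\<sigma> k) * x (\<sigma> k)) \<le> n0 * sqrt (\<Sum>k=n..K. \<beta> (\<sigma> k))"
    if "n \<in> {1..K}" for n
    using x[unfolded feasible_permute_iff[OF perm], rule_format, of "{n..K}"] that
    by (simp add: abs_le_iff)
  have "lin_obj K \<alpha> x =
      (\<Sum>n=1..K. (gamma_tilde \<alpha> \<beta> \<sigma> n - gamma_tilde \<alpha> \<beta> \<sigma> (n - 1))
                 * (\<Sum>k=n..K. \<beta> (\<sigma> k) * x (\<sigma> k)))"
    using \<beta> by (intro lin_obj_eq_sum_gamma_tilde_diff[OF perm]) force
  also have "\<dots> \<le> (\<Sum>n=1..K. (gamma_tilde \<alpha> \<beta> \<sigma> n - gamma_tilde \<alpha> \<beta> \<sigma> (n - 1))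
                             * (n0 * sqrt (\<Sum>k=n..K. \<beta> (\<sigma> k))))"
    by (intro sum_mono mult_left_mono tail gamma_tilde_diff_nonneg[of \<sigma> K \<alpha> \<beta>, OF perm \<alpha> \<beta> sorted])
  also have "\<dots> = Fval K n0 \<alpha> \<beta> \<sigma>"
    by (rule Fval_eq_sum_gamma_tilde_diff[symmetric])
  finally show ?thesis .
qed

lemma weighted_xstar_tilde:
  assumes "\<beta> (\<sigma> k) \<noteq> 0"
  shows "\<beta> (\<sigma> k) * xstar_tilde K n0 \<beta> \<sigma> k =
    n0 * (sqrt (\<Sum>n=k..K. \<beta> (\<sigma> n)) - sqrt (\<Sum>n=Suc k..K. \<beta> (\<sigma> n)))"
  using assms unfolding xstar_tilde_def by simp

lemma tail_sum_weighted_xstar_tilde: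
  assumes "\<And>k. k \<in> {m..K} \<Longrightarrow> \<beta> (\<sigma> k) \<noteq> 0" and "m \<le> Suc K"
  shows "(\<Sum>k=m..K. \<beta> (\<sigma> k) * xstar_tilde K n0 \<beta> \<sigma> k) = n0 * sqrt (\<Sum>k=m..K. \<beta> (\<sigma> k))"
proof -
  let ?r = "\<lambda>k. sqrt (\<Sum>n=k..K. \<beta> (\<sigma> n))"
  have "(\<Sum>k=m..K. \<beta> (\<sigma> k) * xstar_tilde K n0 \<beta> \<sigma> k) = n0 * (\<Sum>k=m..K. ?r k - ?r (Suc k))"
    using assms(1) by (simp add: weighted_xstar_tilde sum_distrib_left)
  also have "(\<Sum>k=m..K. ?r k - ?r (Suc k)) = ?r m - ?r (Suc K)"
    using sum_Suc_diff[OF assms(2), of "\<lambda>k. - ?r k"] by simp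
  finally show ?thesis by simp
qed

lemma feasible_xstar_tilde:
  assumes perm: "\<sigma> permutes {1..K}"
    and \<beta>: "\<And>k. k \<in> {1..K} \<Longrightarrow> \<beta> k > 0"
    and "n0 \<ge> 0"
    and x: "\<forall>k\<in>{1..K}. x (\<sigma> k) = xstar_tilde K n0 \<beta> \<sigma> k"
  shows "feasible K n0 \<beta> x"
  unfolding feasible_permute_iff[OF perm]
proof (intro allI impI)
  fix J assume J: "J \<subseteq> {1..K} \<and> J \<noteq> {}"
  let ?d = "\<lambda>k. sqrt (\<Sum>n=k..K. \<beta> (\<sigma> n)) - sqrt (\<Sum>n=Suc k..K. \<beta> (\<sigma> n))"
  have \<beta>\<sigma>: "\<beta> (\<sigma> k) > 0" if "k \<in> {1..K}" for k
    using \<beta> permutes_in_image[OF perm] that by blast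
  have "\<beta> (\<sigma> k) * x (\<sigma> k) = n0 * ?d k" if "k \<in> J" for k
  proof -
    have "k \<in> {1..K}" using J that by blast
    then have "x (\<sigma> k) = xstar_tilde K n0 \<beta> \<sigma> k" "\<beta> (\<sigma> k) \<noteq> 0"
      using x \<beta>\<sigma>[of k] by auto
    then show ?thesis
      by (simp add: weighted_xstar_tilde)
  qed
  then have sum_eq: "(\<Sum>k\<in>J. \<beta> (\<sigma> k) * x (\<sigma> k)) = n0 * (\<Sum>k\<in>J. ?d k)"
    by (simp add: sum_distrib_left)
  have "0 \<le> ?d k" if "k \<in> {1..K}" for k
  proof -
    have "(\<Sum>n=Suc k..K. \<beta> (\<sigma> n)) \<le> (\<Sum>n=k..K. \<beta> (\<sigma> n))"
      using that \<beta>\<sigma> by (intro sum_mono2) (auto intro: less_imp_le)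
    then show ?thesis by simp
  qed
  then have "0 \<le> (\<Sum>k\<in>J. ?d k)"
    using J by (intro sum_nonneg) blast
  moreover have "(\<Sum>k\<in>J. ?d k) \<le> sqrt (\<Sum>k\<in>J. \<beta> (\<sigma> k))"
    using J \<beta>\<sigma> by (intro sum_sqrt_tail_diff_le_sqrt_sum[where m = 1]) (auto simp: less_imp_le)
  ultimately have "0 \<le> n0 * (\<Sum>k\<in>J. ?d k)" "n0 * (\<Sum>k\<in>J. ?d k) \<le> n0 * sqrt (\<Sum>k\<in>J. \<beta> (\<sigma> k))"
    using \<open>n0 \<ge> 0\<close> by (auto intro: mult_left_mono)
  then show "\<bar>\<Sum>k\<in>J. \<beta> (\<sigma> k) * x (\<sigma> k)\<bar> \<le> n0 * sqrt (\<Sum>k\<in>J. \<beta> (\<sigma> k))"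
    unfolding sum_eq abs_le_iff by linarith
qed

lemma lin_obj_xstar_tilde:
  assumes perm: "\<sigma> permutes {1..K}"
    and \<beta>: "\<And>k. k \<in> {1..K} \<Longrightarrow> \<beta> k > 0"
    and x: "\<forall>k\<in>{1..K}. x (\<sigma> k) = xstar_tilde K n0 \<beta> \<sigma> k"
  shows "lin_obj K \<alpha> x = Fval K n0 \<alpha> \<beta> \<sigma>"
proof -
  have "\<beta> (\<sigma> k) > 0" if "k \<in> {1..K}" for k
    using \<beta> permutes_in_image[OF perm] that by blast
  then have \<beta>\<sigma>: "\<beta> (\<sigma> k) \<noteq> 0" if "k \<in> {1..K}" for k
    using that by fastforce
  have tail: "(\<Sum>k=n..K. \<beta> (\<sigma> k) * x (\<sigma> k)) = n0 * sqrt (\<Sum>k=n..K. \<beta> (\<sigma> k))"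
    if n: "n \<in> {1..K}" for n
  proof -
    have "(\<Sum>k=n..K. \<beta> (\<sigma> k) * x (\<sigma> k)) = (\<Sum>k=n..K. \<beta> (\<sigma> k) * xstar_tilde K n0 \<beta> \<sigma> k)"
      using n x by (intro sum.cong) auto
    also have "\<dots> = n0 * sqrt (\<Sum>k=n..K. \<beta> (\<sigma> k))"
      using n \<beta>\<sigma> by (intro tail_sum_weighted_xstar_tilde) auto
    finally show ?thesis .
  qed
  have "lin_obj K \<alpha> x =
      (\<Sum>n=1..K. (gamma_tilde \<alpha> \<beta> \<sigma> n - gamma_tilde \<alpha> \<beta> \<sigma> (n - 1))
                 * (\<Sum>k=n..K. \<beta> (\<sigma> k) * x (\<sigma> k)))"
    using \<beta> by (intro lin_obj_eq_sum_gamma_tilde_diff[OF perm]) force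
  also have "\<dots> = (\<Sum>n=1..K. (gamma_tilde \<alpha> \<beta> \<sigma> n - gamma_tilde \<alpha> \<beta> \<sigma> (n - 1))
                             * (n0 * sqrt (\<Sum>k=n..K. \<beta> (\<sigma> k))))"
    using tail by (intro sum.cong) simp_all
  also have "\<dots> = Fval K n0 \<alpha> \<beta> \<sigma>"
    by (rule Fval_eq_sum_gamma_tilde_diff[symmetric])
  finally show ?thesis .
qed

theorem theorem1:
  fixes K :: nat and n0 :: real and \<alpha> \<beta> :: "nat \<Rightarrow> real" and \<sigma> :: "nat \<Rightarrow> nat"
  assumes "K \<in> {1,2,3,4}"
    and "n0 \<ge> 0"
    and "\<And>k. k \<in> {1..K} \<Longrightarrow> \<alpha> k \<ge> 0"
    and "\<And>k. k \<in> {1..K} \<Longrightarrow> \<beta> k > 0"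
    and "\<sigma> permutes {1..K}"
    and "\<And>i j. i \<in> {1..K} \<Longrightarrow> j \<in> {1..K} \<Longrightarrow> i \<le> j \<Longrightarrow>
           \<alpha> (\<sigma> i) / \<beta> (\<sigma> i) \<le> \<alpha> (\<sigma> j) / \<beta> (\<sigma> j)"
  shows "(\<forall>x. feasible K n0 \<beta> x \<longrightarrow> lin_obj K \<alpha> x \<le> Fval K n0 \<alpha> \<beta> \<sigma>)
       \<and> (\<forall>x. (\<forall>k\<in>{1..K}. x (\<sigma> k) = xstar_tilde K n0 \<beta> \<sigma> k) \<longrightarrow>
              feasible K n0 \<beta> x \<and> lin_obj K \<alpha> x = Fval K n0 \<alpha> \<beta> \<sigma>)
       \<and> (\<forall>x. feasible K n0 \<beta> x \<longrightarrow> - Fval K n0 \<alpha> \<beta> \<sigma> \<le> lin_obj K \<alpha> x)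
       \<and> (\<forall>x. (\<forall>k\<in>{1..K}. x (\<sigma> k) = - xstar_tilde K n0 \<beta> \<sigma> k) \<longrightarrow>
              feasible K n0 \<beta> x \<and> lin_obj K \<alpha> x = - Fval K n0 \<alpha> \<beta> \<sigma>)"
proof -
  have upper: "lin_obj K \<alpha> x \<le> Fval K n0 \<alpha> \<beta> \<sigma>" if "feasible K n0 \<beta> x" for x
    using assms(5,3,4,6) that by (rule lin_obj_le_Fval)
  have optimal: "feasible K n0 \<beta> x \<and> lin_obj K \<alpha> x = Fval K n0 \<alpha> \<beta> \<sigma>"
    if "\<forall>k\<in>{1..K}. x (\<sigma> k) = xstar_tilde K n0 \<beta> \<sigma> k" for x
  proof
    show "feasible K n0 \<beta> x"
      using assms(5,4,2) that by (rule feasible_xstar_tilde)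
    show "lin_obj K \<alpha> x = Fval K n0 \<alpha> \<beta> \<sigma>"
      using assms(5,4) that by (rule lin_obj_xstar_tilde)
  qed
  show ?thesis
  proof (intro conjI allI impI)
    fix x
    assume "feasible K n0 \<beta> x"
    then show "- Fval K n0 \<alpha> \<beta> \<sigma> \<le> lin_obj K \<alpha> x"
      using upper[of "\<lambda>k. - x k"] by (simp add: feasible_uminus_iff lin_obj_uminus)
  next
    fix x
    assume "\<forall>k\<in>{1..K}. x (\<sigma> k) = - xstar_tilde K n0 \<beta> \<sigma> k"
    then show "feasible K n0 \<beta> x" "lin_obj K \<alpha> x = - Fval K n0 \<alpha> \<beta> \<sigma>"
      using optimal[of "\<lambda>k. - x k"] by (simp_all add: feasible_uminus_iff lin_obj_uminus)
  qed (use upper optimal in blast)+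
qed

end
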